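(* Let $T>0$ and $X_1^{per}=\{v\in H^1(0,T): v(0)=v(T),\ \max_{[0,T]}v+\min_{[0,T]}v=0\}$, $I_1^{per}(v)=\int_0^T v'^2/\|v\|_\infty^2$. Then $I_1^{per}(u)\ge 16/T$ for every $u\in X_1^{per}\setminus\{0\}$, and if $u\in X_1^{per}\setminus\{0\}$ satisfies $I_1^{per}(u)=16/T$, then there exist a constant $c\neq0$ and $x_0\in[0,T]$ such that $u(x)=c\,w(x+x_0)$ for $x\in[0,T]$, where $w$ is the $T$-periodic extension to $\mathbb R$ of $$w(x)=\begin{cases}x,&0\le x\le T/4,\\ -(x-T/2),&T/4\le x\le 3T/4,\\ x-T,&3T/4\le x\le T.\end{cases}$$
   Context: $H^1(0,T)$ is the usual Sobolev space of real-valued functions; elements are identified with their continuous representatives. *)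

theory Defs
  imports "HOL-Analysis.Analysis"
begin

definition test_fun :: "real \<Rightarrow> (real \<Rightarrow> real) \<Rightarrow> bool" where
  "test_fun T \<phi> \<longleftrightarrow> (\<forall>n x. ((deriv ^^ n) \<phi>) differentiable (at x))
      \<and> closure {x. \<phi> x \<noteq> 0} \<subseteq> {0<..<T}"

definition L2 :: "real \<Rightarrow> (real \<Rightarrow> real) \<Rightarrow> bool" where
  "L2 T g \<longleftrightarrow> set_borel_measurable lborel {0<..<T} g
      \<and> set_integrable lborel {0<..<T} (\<lambda>x. (g x)\<^sup>2)"

definition is_weak_deriv :: "real \<Rightarrow> (real \<Rightarrow> real) \<Rightarrow> (real \<Rightarrow> real) \<Rightarrow> bool" where
  "is_weak_deriv T v g \<longleftrightarrow> L2 T g \<and>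
     (\<forall>\<phi>. test_fun T \<phi> \<longrightarrow>
        (LINT x:{0<..<T}|lborel. v x * deriv \<phi> x) = - (LINT x:{0<..<T}|lborel. g x * \<phi> x))"

text \<open>H^1(0,T), elements identified with their continuous representatives on [0,T].\<close>
definition H1 :: "real \<Rightarrow> (real \<Rightarrow> real) \<Rightarrow> bool" where
  "H1 T v \<longleftrightarrow> continuous_on {0..T} v \<and> L2 T v \<and> (\<exists>g. is_weak_deriv T v g)"

definition wderiv :: "real \<Rightarrow> (real \<Rightarrow> real) \<Rightarrow> real \<Rightarrow> real" where
  "wderiv T v = (SOME g. is_weak_deriv T v g)"

definition supnorm :: "real \<Rightarrow> (real \<Rightarrow> real) \<Rightarrow> real" where
  "supnorm T v = Sup ((\<lambda>x. \<bar>v x\<bar>) ` {0..T})"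

definition X1per :: "real \<Rightarrow> (real \<Rightarrow> real) set" where
  "X1per T = {v. H1 T v \<and> v 0 = v T \<and> Sup (v ` {0..T}) + Inf (v ` {0..T}) = 0}"

definition I1per :: "real \<Rightarrow> (real \<Rightarrow> real) \<Rightarrow> real" where
  "I1per T v = (LINT x:{0<..<T}|lborel. (wderiv T v x)\<^sup>2) / (supnorm T v)\<^sup>2"

definition w0 :: "real \<Rightarrow> real \<Rightarrow> real" where
  "w0 T x = (if x \<le> T/4 then x else if x \<le> 3*T/4 then -(x - T/2) else x - T)"

definition wper :: "real \<Rightarrow> real \<Rightarrow> real" where
  "wper T x = w0 T (x - T * of_int \<lfloor>x / T\<rfloor>)"

end

theory Submission
  imports Defs
begin

(* Let u be in X1per T with sup norm M > 0.  By continuity u attains its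
   maximum M at some a and, because max u + min u = 0, its minimum -M at some b.  Going
   around the circle [0,T]/(0 ~ T) from a to b and back, u must fall by 2M and rise by 2M,
   so the total variation of u is at least 4M; Cauchy-Schwarz then gives
   (4M)^2 <= T * int u'^2, i.e. I1per u >= 16/T.  If equality holds, Cauchy-Schwarz is
   sharp: |u'| has mean 4M/T on every subinterval, so u is (4M/T)-Lipschitz, and a
   Lipschitz function that must cover the oscillation 4M in time T at full speed is
   exactly a translate of the triangle wave. *)

definition Cn :: "nat \<Rightarrow> (real \<Rightarrow> real) \<Rightarrow> bool" where
  "Cn n f \<longleftrightarrow> (\<forall>m\<le>n. \<forall>x. (deriv ^^ m) f differentiable (at x))"

lemma real_differentiable_iff_field_differentiable:
  "(f::real\<Rightarrow>real) differentiable at x \<longleftrightarrow> f field_differentiable at x"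
  by (simp add: real_differentiable_def field_differentiable_def)

lemma Cn_0: "Cn 0 f \<longleftrightarrow> (\<forall>x. f differentiable (at x))"
  by (simp add: Cn_def)

lemma Cn_Suc: "Cn (Suc n) f \<longleftrightarrow> (\<forall>x. f differentiable (at x)) \<and> Cn n (deriv f)"
proof -
  have "(\<forall>m\<le>Suc n. P m) \<longleftrightarrow> P 0 \<and> (\<forall>m\<le>n. P (Suc m))" for P :: "nat \<Rightarrow> bool"
    by (metis le0 not0_implies_Suc Suc_le_mono)
  then show ?thesis
    unfolding Cn_def by (simp add: funpow_Suc_right del: funpow.simps)
qed

lemma Cn_differentiable: "Cn n f \<Longrightarrow> f differentiable (at x)"
  by (cases n) (auto simp: Cn_0 Cn_Suc)

lemma Cn_Suc_imp_Cn: "Cn (Suc n) f \<Longrightarrow> Cn n f"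
  by (simp add: Cn_def)

lemma Cn_const: "Cn n (\<lambda>x. c)"
proof (induction n arbitrary: c)
  case (Suc n)
  have "deriv (\<lambda>x. c) = (\<lambda>x. 0)" by (rule ext) simp
  then show ?case using Suc.IH by (simp add: Cn_Suc)
qed (simp add: Cn_0)

lemma Cn_add: "Cn n f \<Longrightarrow> Cn n g \<Longrightarrow> Cn n (\<lambda>x. f x + g x)"
proof (induction n arbitrary: f g)
  case (Suc n)
  have "deriv (\<lambda>x. f x + g x) = (\<lambda>x. deriv f x + deriv g x)"
    using Suc.prems
    by (intro ext deriv_add) (auto simp: Cn_Suc real_differentiable_iff_field_differentiable)
  then show ?case using Suc by (auto simp: Cn_Suc)
qed (simp add: Cn_0)

lemma Cn_mult: "Cn n f \<Longrightarrow> Cn n g \<Longrightarrow> Cn n (\<lambda>x. f x * g x)"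
proof (induction n arbitrary: f g)
  case 0 then show ?case by (simp add: Cn_0)
next
  case (Suc n)
  have "deriv (\<lambda>x. f x * g x) = (\<lambda>x. f x * deriv g x + deriv f x * g x)"
    using Suc.prems
    by (intro ext deriv_mult) (auto simp: Cn_Suc real_differentiable_iff_field_differentiable)
  moreover have "Cn n f" "Cn n g"
    using Suc.prems by (simp_all only: Cn_Suc_imp_Cn)
  then have "Cn n (\<lambda>x. f x * deriv g x + deriv f x * g x)"
    using Suc.prems by (intro Cn_add Suc.IH) (auto simp: Cn_Suc)
  ultimately show ?case using Suc by (auto simp: Cn_Suc)
qed

lemma Cn_id: "Cn n (\<lambda>x. x)"
proof (cases n)
  case (Suc k)
  have "deriv (\<lambda>x. x) = (\<lambda>x. 1)" by (rule ext) simp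
  then show ?thesis using Suc by (simp add: Cn_Suc Cn_const)
qed (simp add: Cn_0)

lemma Cn_affine: "Cn n (\<lambda>x. p * x + q)"
  by (intro Cn_add Cn_mult Cn_const Cn_id)

lemma Cn_diff: "Cn n f \<Longrightarrow> Cn n g \<Longrightarrow> Cn n (\<lambda>x. f x - g x)"
proof -
  assume "Cn n f" "Cn n g"
  then have "Cn n (\<lambda>x. f x + (-1) * g x)" by (intro Cn_add Cn_mult Cn_const)
  then show ?thesis by simp
qed

lemma Cn_compose: "Cn n f \<Longrightarrow> Cn n g \<Longrightarrow> Cn n (\<lambda>x. f (g x))"
proof (induction n arbitrary: f g)
  case 0
  have "(f \<circ> g) differentiable at x" for x
    using 0 by (intro differentiable_chain_at) (simp_all add: Cn_0)
  then show ?case by (simp add: Cn_0 o_def)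
next
  case (Suc n)
  have fd: "f field_differentiable at y" and gd: "g field_differentiable at y" for y
    using Suc.prems Cn_differentiable
    by (simp_all only: real_differentiable_iff_field_differentiable[symmetric])
  have "deriv (\<lambda>x. f (g x)) = (\<lambda>x. deriv f (g x) * deriv g x)"
    using deriv_chain[OF gd fd] by (simp add: o_def fun_eq_iff)
  moreover have "Cn n (deriv f)" "Cn n (deriv g)"
    using Suc.prems by (simp_all add: Cn_Suc)
  then have "Cn n (\<lambda>x. deriv f (g x) * deriv g x)"
    using Cn_mult[OF Suc.IH[OF _ Cn_Suc_imp_Cn[OF Suc.prems(2)]]] by blast
  moreover have "(\<lambda>x. f (g x)) differentiable at x" for x
    using differentiable_chain_at[OF Cn_differentiable[OF Suc.prems(2)]
        Cn_differentiable[OF Suc.prems(1)]] by (simp add: o_def)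
  ultimately show ?case by (simp add: Cn_Suc)
qed

lemma Cn_inverse: "Cn n f \<Longrightarrow> (\<And>x. f x \<noteq> 0) \<Longrightarrow> Cn n (\<lambda>x. inverse (f x))"
proof (induction n arbitrary: f)
  case 0 then show ?case by (auto simp: Cn_0 intro!: derivative_intros)
next
  case (Suc n)
  have "deriv (\<lambda>x. inverse (f x)) = (\<lambda>x. (-1) * deriv f x * (inverse (f x) * inverse (f x)))"
  proof
    fix x
    have "(f has_real_derivative deriv f x) (at x)"
      using Suc.prems by (auto simp: Cn_Suc DERIV_deriv_iff_real_differentiable)
    then have "((\<lambda>x. inverse (f x)) has_real_derivative
        (-1) * deriv f x * (inverse (f x) * inverse (f x))) (at x)"
      using Suc.prems by (auto intro!: derivative_eq_intros simp: power2_eq_square)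
    then show "deriv (\<lambda>x. inverse (f x)) x = (-1) * deriv f x * (inverse (f x) * inverse (f x))"
      by (rule DERIV_imp_deriv)
  qed
  moreover have "Cn n f" using Suc.prems(1) by (rule Cn_Suc_imp_Cn)
  then have "Cn n (\<lambda>x. (-1) * deriv f x * (inverse (f x) * inverse (f x)))"
    using Suc by (intro Cn_mult Cn_const Suc.IH) (auto simp: Cn_Suc)
  moreover have "(\<lambda>x. inverse (f x)) differentiable at x" for x
    using Suc.prems by (auto simp: Cn_Suc intro!: derivative_intros)
  ultimately show ?case by (simp add: Cn_Suc)
qed

text \<open>The classical flat functions \<open>x\<^sup>-\<^sup>k e\<^sup>-\<^sup>1\<^sup>/\<^sup>x\<close> (extended by 0 for x \<le> 0); they are
  closed under differentiation, which makes them smooth.\<close>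
definition flat :: "nat \<Rightarrow> real \<Rightarrow> real" where
  "flat k x = (if x > 0 then inverse x ^ k * exp (- inverse x) else 0)"

text \<open>Exponential decay beats any power: all flat functions vanish to the right of 0.\<close>
lemma flat_tendsto_0: "(flat k \<longlongrightarrow> 0) (at_right 0)"
proof -
  have "((\<lambda>z. z ^ k / exp z) \<longlongrightarrow> (0::real)) at_top" by (rule tendsto_power_div_exp_0)
  then have "((\<lambda>y. inverse y ^ k / exp (inverse y)) \<longlongrightarrow> (0::real)) (at_right 0)"
    using filterlim_inverse_at_top_right by (rule filterlim_compose)
  moreover have "eventually (\<lambda>y. inverse y ^ k / exp (inverse y) = flat k y) (at_right (0::real))"
    by (auto simp: flat_def exp_minus field_simps
        intro!: eventually_mono[OF eventually_at_right_less[of 0]])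
  ultimately show ?thesis by (rule Lim_transform_eventually)
qed

lemma flat_has_deriv: "(flat k has_real_derivative (flat (k+2) x - real k * flat (k+1) x)) (at x)"
proof -
  consider "x > 0" | "x < 0" | "x = 0" by linarith
  then show ?thesis
  proof cases
    case 1
    have "((\<lambda>x. inverse x ^ k * exp (- inverse x)) has_real_derivative
        (flat (k+2) x - real k * flat (k+1) x)) (at x)"
      using 1 by (intro derivative_eq_intros refl) (auto simp: flat_def, cases k, auto)
    then show ?thesis
      by (rule has_field_derivative_transform_within_open[where S="{0<..}"])
         (use 1 in \<open>auto simp: flat_def\<close>)
  next
    case 2
    have "((\<lambda>x. 0) has_real_derivative 0) (at x)" by simp
    then have "(flat k has_real_derivative 0) (at x)"
      by (rule has_field_derivative_transform_within_open[where S="{..<0}"])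
         (use 2 in \<open>auto simp: flat_def\<close>)
    then show ?thesis using 2 by (simp add: flat_def)
  next
    case 3
    text \<open>The difference quotient at 0 is 0 on the left and \<open>flat (k+1)\<close> on the right.\<close>
    have "((\<lambda>y. (flat k y - flat k 0) / (y - 0)) \<longlongrightarrow> 0) (at 0)"
    proof (rule filterlim_split_at)
      have "eventually (\<lambda>y. 0 = (flat k y - flat k 0) / (y - 0)) (at_left (0::real))"
        by (auto simp: flat_def intro!: eventually_mono[OF eventually_at_left_real[of "-1" 0]])
      then show "((\<lambda>y. (flat k y - flat k 0) / (y - 0)) \<longlongrightarrow> 0) (at_left 0)"
        by (rule Lim_transform_eventually[rotated]) simp
      have "eventually (\<lambda>y. flat (k+1) y = (flat k y - flat k 0) / (y - 0)) (at_right (0::real))"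
        by (auto simp: flat_def field_simps intro!: eventually_mono[OF eventually_at_right_less[of 0]])
      then show "((\<lambda>y. (flat k y - flat k 0) / (y - 0)) \<longlongrightarrow> 0) (at_right 0)"
        using flat_tendsto_0[of "k+1"] by (rule Lim_transform_eventually[rotated])
    qed
    then show ?thesis using 3 by (simp add: has_field_derivative_iff flat_def)
  qed
qed

lemma Cn_flat: "Cn n (flat k)"
proof (induction n arbitrary: k)
  case 0 then show ?case using flat_has_deriv by (auto simp: Cn_0 real_differentiable_def)
next
  case (Suc n)
  have "deriv (flat k) = (\<lambda>x. flat (k+2) x - real k * flat (k+1) x)"
    using flat_has_deriv by (intro ext DERIV_imp_deriv)
  moreover have "Cn n (\<lambda>x. flat (k+2) x - real k * flat (k+1) x)"
    by (intro Cn_diff Cn_mult Cn_const Suc.IH)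
  ultimately show ?case using flat_has_deriv by (auto simp: Cn_Suc real_differentiable_def)
qed

lemma flat0_nonneg: "flat 0 x \<ge> 0"
  by (simp add: flat_def)

lemma flat0_pos: "x > 0 \<Longrightarrow> flat 0 x > 0"
  by (simp add: flat_def)

lemma flat0_mono: "x \<le> y \<Longrightarrow> flat 0 x \<le> flat 0 y"
  by (auto simp: flat_def intro: le_imp_inverse_le)

definition smooth_step :: "real \<Rightarrow> real" where
  "smooth_step x = flat 0 x / (flat 0 x + flat 0 (1 - x))"

lemma smooth_step_denom_pos: "flat 0 x + flat 0 (1 - x) > 0"
  using flat0_pos[of x] flat0_pos[of "1 - x"] flat0_nonneg[of x] flat0_nonneg[of "1 - x"]
  by (cases "x > 0") auto

lemma Cn_smooth_step: "Cn n smooth_step"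
proof -
  have "Cn n (\<lambda>x. flat 0 (-1 * x + 1))"
    by (rule Cn_compose[OF Cn_flat Cn_affine])
  then have "Cn n (\<lambda>x. flat 0 x * inverse (flat 0 x + flat 0 (1 - x)))"
    using order_less_imp_not_eq2[OF smooth_step_denom_pos]
    by (intro Cn_mult Cn_flat Cn_inverse Cn_add) auto
  then show ?thesis by (simp add: smooth_step_def[abs_def] divide_inverse)
qed

lemma smooth_step_0: "x \<le> 0 \<Longrightarrow> smooth_step x = 0"
  by (simp add: smooth_step_def flat_def)

lemma smooth_step_1: "x \<ge> 1 \<Longrightarrow> smooth_step x = 1"
  using smooth_step_denom_pos[of x] by (simp add: smooth_step_def flat_def)

lemma smooth_step_bounds: "0 \<le> smooth_step x" "smooth_step x \<le> 1"
  using smooth_step_denom_pos[of x] flat0_nonneg[of x] flat0_nonneg[of "1 - x"]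
  by (auto simp: smooth_step_def field_simps)

lemma smooth_step_mono: "x \<le> y \<Longrightarrow> smooth_step x \<le> smooth_step y"
proof -
  assume xy: "x \<le> y"
  have px: "flat 0 x + flat 0 (1 - x) > 0" and py: "flat 0 y + flat 0 (1 - y) > 0"
    by (rule smooth_step_denom_pos)+
  have "flat 0 x * flat 0 (1 - y) \<le> flat 0 y * flat 0 (1 - x)"
    using xy by (intro mult_mono flat0_mono flat0_nonneg) auto
  then have "flat 0 x * (flat 0 y + flat 0 (1 - y)) \<le> flat 0 y * (flat 0 x + flat 0 (1 - x))"
    by (simp add: algebra_simps)
  then show ?thesis using px py by (simp add: smooth_step_def divide_simps)
qed

lemma smooth_step_has_deriv: "(smooth_step has_real_derivative deriv smooth_step x) (at x)"
  using Cn_differentiable[OF Cn_smooth_step[of 0]] by (simp add: DERIV_deriv_iff_real_differentiable)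

lemma continuous_on_smooth_step: "continuous_on A smooth_step"
  using Cn_differentiable[OF Cn_smooth_step[of 0]]
  by (intro continuous_at_imp_continuous_on ballI differentiable_imp_continuous_within)

lemma continuous_on_deriv_smooth_step: "continuous_on A (deriv smooth_step)"
proof -
  have "Cn 0 (deriv smooth_step)" using Cn_smooth_step[of 1] by (simp add: Cn_Suc)
  then show ?thesis
    by (intro continuous_at_imp_continuous_on ballI differentiable_imp_continuous_within)
       (simp add: Cn_0)
qed

lemma deriv_smooth_step_nonneg: "deriv smooth_step x \<ge> 0"
  by (rule mono_on_imp_deriv_nonneg[OF _ smooth_step_has_deriv, of UNIV])
     (auto intro: mono_onI smooth_step_mono)

lemma deriv_smooth_step_outside: "t < 0 \<or> t > 1 \<Longrightarrow> deriv smooth_step t = 0"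
proof -
  assume t: "t < 0 \<or> t > 1"
  have "(smooth_step has_real_derivative 0) (at t)"
  proof (cases "t < 0")
    case True
    have "((\<lambda>x. 0) has_real_derivative 0) (at t)" by simp
    then show ?thesis
      by (rule has_field_derivative_transform_within_open[where S="{..<0}"])
         (use True smooth_step_0 in auto)
  next
    case False
    have "((\<lambda>x. 1) has_real_derivative 0) (at t)" by simp
    then show ?thesis
      by (rule has_field_derivative_transform_within_open[where S="{1<..}"])
         (use t False smooth_step_1 in auto)
  qed
  then show ?thesis by (rule DERIV_imp_deriv)
qed

text \<open>The derivative of \<open>x \<mapsto> smooth_step ((x - c) / e)\<close>: a continuous nonnegative
  kernel of total mass 1 concentrated on [c, c + e].\<close>
definition step_kernel :: "real \<Rightarrow> real \<Rightarrow> real \<Rightarrow> real" where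
  "step_kernel c e x = deriv smooth_step ((x - c) / e) / e"

lemma scaled_step_has_deriv:
  assumes "e \<noteq> 0"
  shows "((\<lambda>x. smooth_step ((x - c) / e)) has_real_derivative step_kernel c e x) (at x)"
proof -
  have "((\<lambda>x. smooth_step ((x - c) / e)) has_real_derivative
      deriv smooth_step ((x - c) / e) * (1 / e)) (at x)"
    using assms by (intro DERIV_chain2[OF smooth_step_has_deriv]) (auto intro!: derivative_eq_intros)
  then show ?thesis by (simp add: step_kernel_def)
qed

lemma continuous_on_step_kernel: "e \<noteq> 0 \<Longrightarrow> continuous_on A (step_kernel c e)"
  unfolding step_kernel_def[abs_def]
  by (intro continuous_intros continuous_on_compose2[OF continuous_on_deriv_smooth_step[of UNIV]])
     auto

lemma step_kernel_nonneg: "e > 0 \<Longrightarrow> 0 \<le> step_kernel c e x"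
  by (simp add: step_kernel_def deriv_smooth_step_nonneg)

lemma step_kernel_support: "e > 0 \<Longrightarrow> step_kernel c e x \<noteq> 0 \<Longrightarrow> c \<le> x \<and> x \<le> c + e"
  using deriv_smooth_step_outside[of "(x - c) / e"]
  by (force simp: step_kernel_def divide_simps not_less)

lemma step_kernel_has_integral:
  assumes "e > 0" "0 \<le> c" "c + e \<le> T"
  shows "(step_kernel c e has_integral 1) {0..T}"
proof -
  have "(step_kernel c e has_integral smooth_step ((T - c) / e) - smooth_step ((0 - c) / e)) {0..T}"
    using assms
    by (intro fundamental_theorem_of_calculus)
       (auto simp: has_real_derivative_iff_has_vector_derivative[symmetric]
             intro!: DERIV_subset[OF scaled_step_has_deriv[of e]])
  moreover have "smooth_step ((T - c) / e) = 1" "smooth_step ((0 - c) / e) = 0"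
    using assms by (auto intro!: smooth_step_1 smooth_step_0 simp: divide_simps)
  ultimately show ?thesis by simp
qed

lemma step_kernel_approx_identity:
  assumes c: "0 < c" "c < T" and v: "continuous_on {0..T} v"
  shows "((\<lambda>e. integral {0..T} (\<lambda>x. v x * step_kernel c e x)) \<longlongrightarrow> v c) (at_right 0)"
proof (rule tendstoI)
  fix \<eta> :: real assume eta: "\<eta> > 0"
  obtain d where d: "d > 0"
    and v_close: "\<And>x. x \<in> {0..T} \<Longrightarrow> dist x c < d \<Longrightarrow> dist (v x) (v c) < \<eta>/2"
    using v c eta unfolding continuous_on_iff by (metis atLeastAtMost_iff half_gt_zero less_le)
  have "eventually (\<lambda>e. e \<in> {0<..<min d (T - c)}) (at_right (0::real))"
    by (rule eventually_at_right_real) (use d c in auto)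
  then show "eventually (\<lambda>e. dist (integral {0..T} (\<lambda>x. v x * step_kernel c e x)) (v c) < \<eta>)
      (at_right 0)"
  proof (rule eventually_mono)
    fix e assume e: "e \<in> {0<..<min d (T - c)}"
    define K where "K = step_kernel c e"
    have K1: "(K has_integral 1) {0..T}"
      unfolding K_def using e c by (intro step_kernel_has_integral) auto
    have Kcont: "continuous_on {0..T} K"
      unfolding K_def using e by (intro continuous_on_step_kernel) auto
    text \<open>Since K has mass 1, the error is the average of \<open>v - v c\<close> against K,
      and K lives where \<open>v\<close> is within \<open>\<eta>/2\<close> of \<open>v c\<close>.\<close>
    have "integral {0..T} (\<lambda>x. v x * K x) - v c = integral {0..T} (\<lambda>x. (v x - v c) * K x)"
      using K1 v Kcont
      by (simp add: left_diff_distrib integral_diff integrable_continuous_interval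
          continuous_intros integral_mult_right integral_unique)
    moreover have "norm (integral {0..T} (\<lambda>x. (v x - v c) * K x))
        \<le> integral {0..T} (\<lambda>x. \<eta>/2 * K x)"
    proof (rule integral_norm_bound_integral)
      show "(\<lambda>x. (v x - v c) * K x) integrable_on {0..T}"
        by (intro integrable_continuous_interval continuous_intros v Kcont)
      show "(\<lambda>x. \<eta>/2 * K x) integrable_on {0..T}"
        using K1 by (intro integrable_on_mult_right has_integral_integrable)
      fix x assume x: "x \<in> {0..T}"
      show "norm ((v x - v c) * K x) \<le> \<eta>/2 * K x"
      proof (cases "K x = 0")
        case False
        then have "dist x c < d"
          using step_kernel_support[of e c x] e by (auto simp: K_def dist_real_def)
        then have "\<bar>v x - v c\<bar> \<le> \<eta>/2" using v_close x by (force simp: dist_real_def)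
        then show ?thesis
          using step_kernel_nonneg[of e c x] e mult_right_mono[of "\<bar>v x - v c\<bar>" "\<eta>/2" "K x"]
          by (auto simp: K_def abs_mult)
      qed simp
    qed
    moreover have "integral {0..T} (\<lambda>x. \<eta>/2 * K x) = \<eta>/2"
      using K1 by (simp add: integral_mult_right integral_unique)
    ultimately show "dist (integral {0..T} (\<lambda>x. v x * step_kernel c e x)) (v c) < \<eta>"
      using eta by (simp add: dist_real_def K_def)
  qed
qed

text \<open>Smooth approximations of the indicator function of (a, b].\<close>
definition bump :: "real \<Rightarrow> real \<Rightarrow> real \<Rightarrow> real \<Rightarrow> real" where
  "bump a b e x = smooth_step ((x - a) / e) - smooth_step ((x - b) / e)"

lemma bump_has_deriv:
  "e \<noteq> 0 \<Longrightarrow> (bump a b e has_real_derivative step_kernel a e x - step_kernel b e x) (at x)"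
  unfolding bump_def[abs_def] by (intro derivative_intros scaled_step_has_deriv)

lemma continuous_on_bump: "continuous_on A (bump a b e)"
  unfolding bump_def[abs_def] divide_inverse
  by (intro continuous_intros continuous_on_compose2[OF continuous_on_smooth_step[of UNIV]]) auto

lemma bump_abs_le_1: "\<bar>bump a b e x\<bar> \<le> 1"
  using smooth_step_bounds[of "(x - a) / e"] smooth_step_bounds[of "(x - b) / e"]
  by (simp add: bump_def)

lemma bump_test_fun:
  assumes "0 < a" "a \<le> b" "e > 0" "b + e < T"
  shows "test_fun T (bump a b e)"
proof -
  have "Cn n (bump a b e)" for n
  proof -
    have "Cn n (\<lambda>x. inverse e * x + (- c * inverse e))" for c by (rule Cn_affine)
    moreover have "(\<lambda>x. inverse e * x + (- c * inverse e)) = (\<lambda>x. (x - c) / e)" for c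
      by (rule ext) (simp add: divide_inverse algebra_simps)
    ultimately have "Cn n (\<lambda>x. (x - c) / e)" for c by metis
    then show ?thesis
      unfolding bump_def[abs_def] by (intro Cn_diff Cn_compose[OF Cn_smooth_step])
  qed
  then have smooth: "\<forall>n x. (deriv ^^ n) (bump a b e) differentiable (at x)"
    by (auto simp: Cn_def)
  text \<open>Left of a both steps are 0, right of \<open>b + e\<close> both are 1.\<close>
  have "{x. bump a b e x \<noteq> 0} \<subseteq> {a..b + e}"
  proof
    fix x assume x: "x \<in> {x. bump a b e x \<noteq> 0}"
    have "\<not> x < a"
      using x assms smooth_step_0[of "(x - a) / e"] smooth_step_0[of "(x - b) / e"]
      by (auto simp: bump_def divide_simps)
    moreover have "\<not> x > b + e"
      using x assms smooth_step_1[of "(x - a) / e"] smooth_step_1[of "(x - b) / e"]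
      by (auto simp: bump_def divide_simps)
    ultimately show "x \<in> {a..b + e}" by auto
  qed
  then have "closure {x. bump a b e x \<noteq> 0} \<subseteq> {a..b + e}"
    by (intro closure_minimal) auto
  also have "\<dots> \<subseteq> {0<..<T}" using assms by auto
  finally show ?thesis using smooth by (simp add: test_fun_def)
qed

text \<open>As the width shrinks the bumps converge pointwise to the indicator of (a, b];
  in fact they agree with it for all sufficiently small widths.\<close>
lemma bump_tendsto_indicator:
  assumes "a \<le> b"
  shows "((\<lambda>e. bump a b e x) \<longlongrightarrow> indicator {a<..b} x) (at_right 0)"
proof -
  consider "x \<le> a" | "a < x" "x \<le> b" | "b < x" by linarith
  then have "\<exists>d>0. \<forall>e\<in>{0<..<d}. bump a b e x = indicator {a<..b} x"
  proof cases
    case 1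
    then show ?thesis
      using assms by (intro exI[of _ 1]) (auto simp: bump_def smooth_step_0 divide_simps)
  next
    case 2
    then show ?thesis
      by (intro exI[of _ "x - a"]) (auto simp: bump_def smooth_step_0 smooth_step_1 divide_simps)
  next
    case 3
    then show ?thesis
      using assms by (intro exI[of _ "x - b"]) (auto simp: bump_def smooth_step_1 divide_simps)
  qed
  then obtain d where "d > 0" "\<forall>e\<in>{0<..<d}. bump a b e x = indicator {a<..b} x" by blast
  then have "eventually (\<lambda>e. bump a b e x = indicator {a<..b} x) (at_right 0)"
    using eventually_at_right_real[of 0 d] by (auto elim: eventually_mono)
  then show ?thesis by (rule tendsto_eventually)
qed

text \<open>On the bounded interval (0,T), square integrable functions are integrable,
  since \<open>\<bar>g\<bar> \<le> 1 + g\<^sup>2\<close>.\<close>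
lemma L2_set_integrable:
  assumes "L2 T g"
  shows "set_integrable lborel {0<..<T} g"
proof -
  have "set_integrable lborel {0..T} (\<lambda>x. 1::real)"
    by (rule borel_integrable_atLeastAtMost') simp
  then have "set_integrable lborel {0<..<T} (\<lambda>x. 1::real)"
    by (rule set_integrable_subset) auto
  then have "set_integrable lborel {0<..<T} (\<lambda>x. 1 + (g x)\<^sup>2)"
    using assms by (intro set_integral_add) (simp_all add: L2_def)
  then show ?thesis
    unfolding set_integrable_def
  proof (rule Bochner_Integration.integrable_bound)
    show "(\<lambda>x. indicator {0<..<T} x *\<^sub>R g x) \<in> borel_measurable lborel"
      using assms by (simp add: L2_def set_borel_measurable_def)
    have "\<bar>y\<bar> \<le> 1 + y\<^sup>2" for y :: real
      using zero_le_power2[of "\<bar>y\<bar> - 1"] by (simp add: power2_eq_square algebra_simps)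
    then show "AE x in lborel. norm (indicator {0<..<T} x *\<^sub>R g x)
        \<le> norm (indicator {0<..<T} x *\<^sub>R (1 + (g x)\<^sup>2))"
      by (intro AE_I2) (auto simp: indicator_def)
  qed
qed

lemma set_integrable_imp_HK:
  assumes "set_integrable lborel {0<..<T} (f::real\<Rightarrow>real)"
  shows "f integrable_on {0..T}" "(LINT x:{0<..<T}|lborel. f x) = integral {0..T} f"
  using set_borel_integral_eq_integral[OF assms]
  by (simp_all add: integrable_on_open_interval_real integral_open_interval_real)

lemma continuous_set_integrable:
  "continuous_on {0..T} (h::real\<Rightarrow>real) \<Longrightarrow> set_integrable lborel {0<..<T} h"
  by (rule set_integrable_subset[OF borel_integrable_atLeastAtMost']) auto

text \<open>Testing against the bumps of (a, b] with shrinking width recovers the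
  integral of g over [a, b] (dominated convergence, dominated by \<open>\<bar>g\<bar>\<close>).\<close>
lemma bump_integral_tendsto:
  assumes g: "set_integrable lborel {0<..<T} g"
    and ab: "0 < a" "a \<le> b" "b < T"
    and e: "filterlim e (at_right 0) sequentially"
  shows "(\<lambda>n. LINT x:{0<..<T}|lborel. g x * bump a b (e n) x) \<longlonglongrightarrow> integral {a..b} g"
proof -
  have gm: "(\<lambda>x. indicator {0<..<T} x *\<^sub>R g x) \<in> borel_measurable lborel"
    using g by (simp add: set_integrable_def)
  have "(\<lambda>n. LINT x:{0<..<T}|lborel. g x * bump a b (e n) x)
      \<longlonglongrightarrow> (LINT x:{a<..b}|lborel. g x)"
    unfolding set_lebesgue_integral_def
  proof (rule integral_dominated_convergence[where w="\<lambda>x. indicator {0<..<T} x * \<bar>g x\<bar>"])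
    have "(\<lambda>x. indicator {a<..b} x *\<^sub>R g x)
        = (\<lambda>x. indicator {a<..b} x * (indicator {0<..<T} x *\<^sub>R g x))"
      using ab by (intro ext) (auto simp: indicator_def)
    then show "(\<lambda>x. indicator {a<..b} x *\<^sub>R g x) \<in> borel_measurable lborel"
      using gm by (simp only:) (intro borel_measurable_times, auto)
    fix n
    have "continuous_on UNIV (bump a b (e n))"
      by (rule continuous_on_bump)
    then show "(\<lambda>x. indicator {0<..<T} x *\<^sub>R (g x * bump a b (e n) x)) \<in> borel_measurable lborel"
      using gm borel_measurable_continuous_onI[of "bump a b (e n)"]
      by (simp add: mult.assoc[symmetric] borel_measurable_times)
    show "AE x in lborel. norm (indicator {0<..<T} x *\<^sub>R (g x * bump a b (e n) x))
        \<le> indicator {0<..<T} x * \<bar>g x\<bar>"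
    proof (rule AE_I2)
      fix x
      have "\<bar>g x\<bar> * \<bar>bump a b (e n) x\<bar> \<le> \<bar>g x\<bar>"
        using bump_abs_le_1 by (rule mult_left_le) simp
      then show "norm (indicator {0<..<T} x *\<^sub>R (g x * bump a b (e n) x))
          \<le> indicator {0<..<T} x * \<bar>g x\<bar>"
        by (auto simp: indicator_def abs_mult)
    qed
  next
    show "integrable lborel (\<lambda>x. indicator {0<..<T} x * \<bar>g x\<bar>)"
      using set_integrable_abs[OF g] by (simp add: set_integrable_def)
    show "AE x in lborel. (\<lambda>n. indicator {0<..<T} x *\<^sub>R (g x * bump a b (e n) x))
        \<longlonglongrightarrow> indicator {a<..b} x *\<^sub>R g x"
    proof (rule AE_I2)
      fix x
      have "(\<lambda>n. bump a b (e n) x) \<longlonglongrightarrow> indicator {a<..b} x"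
        by (rule filterlim_compose[OF bump_tendsto_indicator[OF ab(2)] e])
      then have "(\<lambda>n. indicator {0<..<T} x * (g x * bump a b (e n) x))
          \<longlonglongrightarrow> indicator {0<..<T} x * (g x * indicator {a<..b} x)"
        by (intro tendsto_mult tendsto_const)
      moreover have "indicator {0<..<T} x * (g x * indicator {a<..b} x)
          = indicator {a<..b} x *\<^sub>R g x"
        using ab by (auto simp: indicator_def)
      ultimately show "(\<lambda>n. indicator {0<..<T} x *\<^sub>R (g x * bump a b (e n) x))
          \<longlonglongrightarrow> indicator {a<..b} x *\<^sub>R g x"
        by simp
    qed
  qed
  moreover have "(LINT x:{a<..b}|lborel. g x) = integral {a<..b} g"
    using ab by (intro set_borel_integral_eq_integral(2) set_integrable_subset[OF g]) auto
  moreover have "integral {a<..b} g = integral {a..b} g"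
    by (rule integral_spike_set) (auto intro: negligible_subset[OF negligible_sing[of a]])
  ultimately show ?thesis by simp
qed

text \<open>Weak fundamental theorem of calculus in the interior: test the weak-derivative
  identity against the bumps of (a, b] of width \<open>(T - b) / (2 (n + 1))\<close>.  The left side tends to
  \<open>v a - v b\<close> (approximate identity), the right side to \<open>-\<integral>\<^sub>a\<^sup>b g\<close>.\<close>
lemma weak_ftc_interior:
  assumes ab: "0 < a" "a \<le> b" "b < T" and v: "continuous_on {0..T} v"
    and wd: "is_weak_deriv T v g"
  shows "v b - v a = integral {a..b} g"
proof -
  define e where "e n = (T - b) / 2 * inverse (real (Suc n))" for n
  have e_pos: "e n > 0" for n
    using ab by (simp add: e_def)
  have e_small: "b + e n < T" for n
  proof -
    have "e n \<le> (T - b) / 2"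
      unfolding e_def using ab by (intro mult_left_le) (auto simp: field_simps)
    then show ?thesis using ab by (simp add: field_simps)
  qed
  have e_lim: "filterlim e (at_right 0) sequentially"
    unfolding e_def using e_pos
    by (intro tendsto_imp_filterlim_at_right tendsto_mult_right_zero LIMSEQ_inverse_real_of_nat)
       (simp add: e_def)
  have g: "set_integrable lborel {0<..<T} g"
    using wd by (intro L2_set_integrable) (simp add: is_weak_deriv_def)
  have K_lim: "(\<lambda>n. integral {0..T} (\<lambda>x. v x * step_kernel c (e n) x)) \<longlonglongrightarrow> v c"
    if "0 < c" "c < T" for c
    using filterlim_compose[OF step_kernel_approx_identity[OF that v] e_lim] .
  have weak: "(LINT x:{0<..<T}|lborel. v x * deriv (bump a b (e n)) x)
      = - (LINT x:{0<..<T}|lborel. g x * bump a b (e n) x)" for n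
    using wd bump_test_fun[OF ab(1,2) e_pos e_small] by (simp add: is_weak_deriv_def)
  have lhs: "(LINT x:{0<..<T}|lborel. v x * deriv (bump a b (e n)) x)
      = integral {0..T} (\<lambda>x. v x * step_kernel a (e n) x)
        - integral {0..T} (\<lambda>x. v x * step_kernel b (e n) x)" for n
  proof -
    have K: "continuous_on {0..T} (step_kernel c (e n))" for c
      using e_pos[of n] by (intro continuous_on_step_kernel) auto
    have "deriv (bump a b (e n)) = (\<lambda>x. step_kernel a (e n) x - step_kernel b (e n) x)"
      using bump_has_deriv e_pos[of n] by (intro ext DERIV_imp_deriv) auto
    then have "(LINT x:{0<..<T}|lborel. v x * deriv (bump a b (e n)) x)
        = integral {0..T} (\<lambda>x. v x * step_kernel a (e n) x - v x * step_kernel b (e n) x)"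
      by (simp add: right_diff_distrib set_integrable_imp_HK(2)[OF continuous_set_integrable]
          continuous_intros v K)
    also have "\<dots> = integral {0..T} (\<lambda>x. v x * step_kernel a (e n) x)
        - integral {0..T} (\<lambda>x. v x * step_kernel b (e n) x)"
      by (intro integral_diff integrable_continuous_interval continuous_intros v K)
    finally show ?thesis .
  qed
  have "(\<lambda>n. LINT x:{0<..<T}|lborel. v x * deriv (bump a b (e n)) x) \<longlonglongrightarrow> v a - v b"
    unfolding lhs using ab by (intro tendsto_diff K_lim) auto
  moreover have "(\<lambda>n. LINT x:{0<..<T}|lborel. v x * deriv (bump a b (e n)) x)
      \<longlonglongrightarrow> - integral {a..b} g"
    unfolding weak by (intro tendsto_minus bump_integral_tendsto[OF g ab e_lim])
  ultimately have "v a - v b = - integral {a..b} g" by (rule LIMSEQ_unique)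
  then show ?thesis by simp
qed

text \<open>v is the primitive of its weak derivative on all of [0,T]: \<open>v - \<integral>\<^sub>0 g\<close> is
  constant on (0,T) by the interior version, hence on [0,T] by continuity.\<close>
lemma weak_ftc:
  assumes T: "T > 0" and v: "continuous_on {0..T} v" and wd: "is_weak_deriv T v g"
    and xy: "0 \<le> x" "x \<le> y" "y \<le> T"
  shows "v y - v x = integral {x..y} g"
proof -
  have gi: "g integrable_on {0..T}"
    using wd by (intro set_integrable_imp_HK(1) L2_set_integrable) (simp add: is_weak_deriv_def)
  define G where "G t = integral {0..t} g" for t
  have G_diff: "integral {s..t} g = G t - G s" if "0 \<le> s" "s \<le> t" "t \<le> T" for s t
  proof -
    have "g integrable_on {0..t}"
      by (rule integrable_on_subinterval[OF gi]) (use that in auto)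
    then show ?thesis
      using Henstock_Kurzweil_Integration.integral_combine[of 0 s t g] that by (simp add: G_def)
  qed
  define h where "h t = v t - G t" for t
  have "continuous_on (closure {0<..<T}) h"
    unfolding h_def G_def closure_greaterThanLessThan[OF T]
    by (intro continuous_intros v indefinite_integral_continuous_1[OF gi])
  moreover have "h t = h (T/2)" if t: "t \<in> {0<..<T}" for t
  proof (cases "t \<le> T/2")
    case True
    then have "v (T/2) - v t = G (T/2) - G t"
      using weak_ftc_interior[of t "T/2" T v g] G_diff[of t "T/2"] t T v wd by simp
    then show ?thesis by (simp add: h_def)
  next
    case False
    then have "v t - v (T/2) = G t - G (T/2)"
      using weak_ftc_interior[of "T/2" t T v g] G_diff[of "T/2" t] t T v wd by simp
    then show ?thesis by (simp add: h_def)
  qed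
  ultimately have h_const: "h t = h (T/2)" if "t \<in> {0..T}" for t
  proof (rule continuous_constant_on_closure)
    show "t \<in> closure {0<..<T}" using that T by simp
  qed
  have "h y = h x" using h_const[of x] h_const[of y] xy by simp
  then show ?thesis using G_diff[OF xy] by (simp add: h_def)
qed

lemma integral_square_deviation:
  fixes f :: "real \<Rightarrow> real"
  assumes fi: "f integrable_on {x..y}" and f2i: "(\<lambda>t. (f t)\<^sup>2) integrable_on {x..y}"
    and xy: "x \<le> y"
  shows "(\<lambda>t. (f t - c)\<^sup>2) integrable_on {x..y}"
    and "integral {x..y} (\<lambda>t. (f t - c)\<^sup>2)
      = integral {x..y} (\<lambda>t. (f t)\<^sup>2) - 2 * c * integral {x..y} f + c\<^sup>2 * (y - x)"
proof -
  have sq: "(\<lambda>t. (f t - c)\<^sup>2) = (\<lambda>t. ((f t)\<^sup>2 - 2 * c * f t) + c\<^sup>2)"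
    by (rule ext) (simp add: power2_eq_square algebra_simps)
  have i: "(\<lambda>t. (f t)\<^sup>2 - 2 * c * f t) integrable_on {x..y}"
    by (intro integrable_diff f2i integrable_on_mult_right fi)
  then show "(\<lambda>t. (f t - c)\<^sup>2) integrable_on {x..y}"
    unfolding sq by (intro integrable_add integrable_const_ivl)
  show "integral {x..y} (\<lambda>t. (f t - c)\<^sup>2)
      = integral {x..y} (\<lambda>t. (f t)\<^sup>2) - 2 * c * integral {x..y} f + c\<^sup>2 * (y - x)"
    unfolding sq integral_add[OF i integrable_const_ivl]
      integral_diff[OF f2i integrable_on_mult_right[OF fi]]
    using xy by simp
qed

text \<open>Cauchy--Schwarz for HK integrals on an interval:
  \<open>(\<integral>\<^sub>x\<^sup>y h)\<^sup>2 \<le> (y - x) \<integral>\<^sub>x\<^sup>y h\<^sup>2\<close>, from \<open>0 \<le> \<integral>\<^sub>x\<^sup>y (h - c)\<^sup>2\<close> with c the mean of h.\<close>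
lemma integral_square_le:
  fixes h :: "real \<Rightarrow> real"
  assumes xy: "x < y" and dev_integrable: "h integrable_on {x..y}"
    and h2i: "(\<lambda>t. (h t)\<^sup>2) integrable_on {x..y}"
  shows "(integral {x..y} h)\<^sup>2 \<le> (y - x) * integral {x..y} (\<lambda>t. (h t)\<^sup>2)"
proof -
  define I J where "I = integral {x..y} h" and "J = integral {x..y} (\<lambda>t. (h t)\<^sup>2)"
  define c where "c = I / (y - x)"
  have "0 \<le> integral {x..y} (\<lambda>t. (h t - c)\<^sup>2)"
    using integral_square_deviation(1)[OF dev_integrable h2i] xy by (intro integral_nonneg) auto
  also have "\<dots> = J - 2 * c * I + c\<^sup>2 * (y - x)"
    using integral_square_deviation(2)[OF dev_integrable h2i] xy by (simp add: I_def J_def)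
  also have "\<dots> = J - c * I"
  proof -
    have "c * (y - x) = I" using xy by (simp add: c_def)
    then show ?thesis by (simp add: power2_eq_square mult.assoc)
  qed
  finally have "c * I \<le> J" by simp
  then show ?thesis using xy by (simp add: I_def J_def c_def power2_eq_square field_simps)
qed

text \<open>A function u on [0,T] with \<open>u 0 = u T\<close> that is the primitive of g, with g, \<open>\<bar>g\<bar>\<close>
  and \<open>g\<^sup>2\<close> integrable; this is all the structure of \<open>X1per\<close> the estimates use.\<close>
locale periodic_primitive =
  fixes T :: real and u g :: "real \<Rightarrow> real"
  assumes T_pos: "T > 0"
    and integrable: "g integrable_on {0..T}"
    and abs_integrable: "(\<lambda>x. \<bar>g x\<bar>) integrable_on {0..T}"
    and square_integrable: "(\<lambda>x. (g x)\<^sup>2) integrable_on {0..T}"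
    and primitive: "\<And>x y. 0 \<le> x \<Longrightarrow> x \<le> y \<Longrightarrow> y \<le> T \<Longrightarrow> u y - u x = integral {x..y} g"
    and periodic: "u 0 = u T"
begin

definition variation :: "real \<Rightarrow> real \<Rightarrow> real" where
  "variation x y = integral {x..y} (\<lambda>t. \<bar>g t\<bar>)"

lemma integrable_sub:
  fixes f :: "real \<Rightarrow> real"
  assumes "f integrable_on {0..T}" "0 \<le> x" "y \<le> T"
  shows "f integrable_on {x..y}"
  by (rule integrable_on_subinterval[OF assms(1)]) (use assms in auto)

lemma increment_le_variation:
  assumes "0 \<le> x" "x \<le> y" "y \<le> T"
  shows "\<bar>u y - u x\<bar> \<le> variation x y"
  using integral_norm_bound_integral[OF integrable_sub[OF integrable]
      integrable_sub[OF abs_integrable]] assms primitive[OF assms]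
  by (simp add: variation_def)

lemma variation_add:
  "0 \<le> x \<Longrightarrow> x \<le> y \<Longrightarrow> y \<le> z \<Longrightarrow> z \<le> T \<Longrightarrow>
    variation x y + variation y z = variation x z"
  unfolding variation_def
  by (intro Henstock_Kurzweil_Integration.integral_combine integrable_sub[OF abs_integrable]) auto

text \<open>Going around the circle, u has to travel from its maximum M to its minimum
  \<open>-M\<close> and back, so its total variation is at least 4M.\<close>
lemma oscillation_le_variation:
  assumes ab: "a \<in> {0..T}" "b \<in> {0..T}" "u a = M" "u b = - M" and M: "M \<ge> 0"
  shows "4 * M \<le> variation 0 T"
proof -
  define p q where "p = min a b" and "q = max a b"
  have pq: "0 \<le> p" "p \<le> q" "q \<le> T" using ab by (auto simp: p_def q_def)
  have osc: "\<bar>u q - u p\<bar> = 2 * M"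
    using ab M by (auto simp: p_def q_def min_def max_def)
  have "2 * M \<le> variation p q"
    using increment_le_variation[OF pq] osc by linarith
  moreover have "2 * M \<le> variation 0 p + variation q T"
  proof -
    have "\<bar>u q - u p\<bar> \<le> \<bar>u p - u 0\<bar> + \<bar>u T - u q\<bar>"
      using periodic by linarith
    moreover have "\<bar>u p - u 0\<bar> \<le> variation 0 p" "\<bar>u T - u q\<bar> \<le> variation q T"
      using increment_le_variation pq by auto
    ultimately show ?thesis using osc by linarith
  qed
  moreover have "variation 0 p + variation p q + variation q T = variation 0 T"
    using variation_add[of 0 p q] variation_add[of 0 q T] pq by simp
  ultimately show ?thesis by linarith
qed

text \<open>The energy estimate: Cauchy--Schwarz turns the variation bound into
  \<open>16 M\<^sup>2 / T \<le> \<integral>\<^sub>0\<^sup>T g\<^sup>2\<close>.\<close>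
lemma energy_lower_bound:
  assumes "a \<in> {0..T}" "b \<in> {0..T}" "u a = M" "u b = - M" and M: "M \<ge> 0"
  shows "16 * M\<^sup>2 / T \<le> integral {0..T} (\<lambda>x. (g x)\<^sup>2)"
proof -
  have "(4 * M)\<^sup>2 \<le> (variation 0 T)\<^sup>2"
    using oscillation_le_variation[OF assms] M by (intro power_mono) auto
  also have "\<dots> \<le> T * integral {0..T} (\<lambda>x. (g x)\<^sup>2)"
    using integral_square_le[OF T_pos abs_integrable] square_integrable
    by (simp add: variation_def)
  finally show ?thesis using T_pos by (simp add: field_simps power2_eq_square)
qed

text \<open>Equality in the energy estimate forces equality in Cauchy--Schwarz: \<open>\<bar>g\<bar>\<close> has
  constant mean \<open>k = 4M/T\<close> on every subinterval, so u is k-Lipschitz.  This follows from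
  \<open>\<integral>\<^sub>0\<^sup>T (\<bar>g\<bar> - k)\<^sup>2 = 2k (kT - variation 0 T) \<le> 0\<close>.\<close>
lemma energy_equality_lipschitz:
  assumes ab: "a \<in> {0..T}" "b \<in> {0..T}" "u a = M" "u b = - M" and M: "M \<ge> 0"
    and eq: "integral {0..T} (\<lambda>x. (g x)\<^sup>2) = 16 * M\<^sup>2 / T"
    and xy: "0 \<le> x" "x \<le> y" "y \<le> T"
  shows "\<bar>u y - u x\<bar> \<le> 4 * M / T * (y - x)"
proof -
  define k where "k = 4 * M / T"
  have k: "k \<ge> 0" "k * T = 4 * M" using M T_pos by (auto simp: k_def)
  have abs_sq: "(\<lambda>t. \<bar>g t\<bar>\<^sup>2) integrable_on {0..T}"
    using square_integrable by simp
  note dev = integral_square_deviation[OF abs_integrable abs_sq, of k]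
  have E: "integral {0..T} (\<lambda>x. (g x)\<^sup>2) = k\<^sup>2 * T"
    using eq T_pos by (simp add: k_def power2_eq_square field_simps)
  have "integral {0..T} (\<lambda>t. (\<bar>g t\<bar> - k)\<^sup>2) = k\<^sup>2 * T - 2 * k * variation 0 T + k\<^sup>2 * T"
    using dev(2) T_pos by (simp add: variation_def E)
  also have "\<dots> = 2 * k * (k * T - variation 0 T)"
    by (simp add: power2_eq_square algebra_simps)
  also have "\<dots> \<le> 0"
    using oscillation_le_variation[OF ab M] k by (intro mult_nonneg_nonpos) auto
  finally have "integral {0..T} (\<lambda>t. (\<bar>g t\<bar> - k)\<^sup>2) \<le> 0" .
  moreover have "integral {x..y} (\<lambda>t. (\<bar>g t\<bar> - k)\<^sup>2)
      \<le> integral {0..T} (\<lambda>t. (\<bar>g t\<bar> - k)\<^sup>2)"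
    using xy by (intro integral_subset_le integrable_sub[OF dev(1)] dev(1)) auto
  ultimately have dev_xy: "integral {x..y} (\<lambda>t. (\<bar>g t\<bar> - k)\<^sup>2) \<le> 0" by linarith
  have dev_integrable: "(\<lambda>t. \<bar>g t\<bar> - k) integrable_on {x..y}"
    using xy by (intro integrable_diff integrable_sub[OF abs_integrable] integrable_const_ivl)
  have "integral {x..y} (\<lambda>t. \<bar>g t\<bar> - k) = 0"
  proof (cases "x = y")
    case False
    have "(integral {x..y} (\<lambda>t. \<bar>g t\<bar> - k))\<^sup>2
        \<le> (y - x) * integral {x..y} (\<lambda>t. (\<bar>g t\<bar> - k)\<^sup>2)"
      using False xy by (intro integral_square_le dev_integrable integrable_sub[OF dev(1)]) auto
    also have "\<dots> \<le> 0"
      using dev_xy xy by (simp add: mult_nonneg_nonpos)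
    finally show ?thesis by simp
  qed simp
  moreover have "integral {x..y} (\<lambda>t. \<bar>g t\<bar> - k) = variation x y - k * (y - x)"
    unfolding variation_def using xy
    by (simp add: integral_diff[OF integrable_sub[OF abs_integrable] integrable_const_ivl])
  ultimately show ?thesis using increment_le_variation[OF xy] by (simp add: k_def)
qed

end

text \<open>The triangle wave of slopes \<open>\<plusminus>1\<close> with maximum \<open>T/4\<close> at a and minimum \<open>-T/4\<close> at
  \<open>a + T/2\<close>, written on [0,T].\<close>
definition peaked_triangle :: "real \<Rightarrow> real \<Rightarrow> real \<Rightarrow> real" where
  "peaked_triangle T a x =
     (if x \<le> a then T/4 - a + x else if x \<le> a + T/2 then T/4 + a - x else x - a - 3*T/4)"

lemma wper_first_period: "T > 0 \<Longrightarrow> 0 \<le> y \<Longrightarrow> y < T \<Longrightarrow> wper T y = w0 T y"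
proof -
  assume "T > 0" "0 \<le> y" "y < T"
  then have "\<lfloor>y / T\<rfloor> = 0" by (simp add: floor_eq_iff divide_simps)
  then show ?thesis by (simp add: wper_def)
qed

lemma wper_second_period: "T > 0 \<Longrightarrow> T \<le> y \<Longrightarrow> y < 2 * T \<Longrightarrow> wper T y = w0 T (y - T)"
proof -
  assume "T > 0" "T \<le> y" "y < 2 * T"
  then have "\<lfloor>y / T\<rfloor> = 1" by (simp add: floor_eq_iff divide_simps)
  then show ?thesis by (simp add: wper_def)
qed

text \<open>Every peaked triangle with peak in [0, T/2] is a translate of the normalised wave
  \<open>wper\<close>; the shift \<open>T/4 - a\<close> is taken modulo T.\<close>
lemma peaked_triangle_eq_wper:
  assumes T: "T > 0" and a: "0 \<le> a" "a \<le> T/2"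
  shows "\<exists>x0\<in>{0..T}. \<forall>x\<in>{0..T}. peaked_triangle T a x = wper T (x + x0)"
proof -
  define x0 where "x0 = (if a \<le> T/4 then T/4 - a else 5*T/4 - a)"
  have "x0 \<in> {0..T}" using a by (auto simp: x0_def)
  moreover have "peaked_triangle T a x = wper T (x + x0)" if x: "x \<in> {0..T}" for x
  proof (cases "x + x0 < T")
    case True
    then have "wper T (x + x0) = w0 T (x + x0)"
      using x a T by (intro wper_first_period) (auto simp: x0_def)
    then show ?thesis
      using True x a by (auto simp: peaked_triangle_def w0_def x0_def split: if_splits)
  next
    case False
    then have "wper T (x + x0) = w0 T (x + x0 - T)"
      using x a T by (intro wper_second_period) (auto simp: x0_def)
    then show ?thesis
      using False x a by (auto simp: peaked_triangle_def w0_def x0_def split: if_splits)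
  qed
  ultimately show ?thesis by blast
qed

text \<open>Rigidity: a k-Lipschitz function with \<open>u 0 = u T\<close>, maximum M at a, minimum \<open>-M\<close>
  at \<open>b > a\<close> and \<open>kT = 4M\<close> has no slack: it must run at full speed k from a down
  to b, which forces \<open>b = a + T/2\<close>, and from b around the circle back up to a.\<close>
lemma lipschitz_extremal_triangle:
  assumes T: "T > 0" and k: "k > 0" "k * T = 4 * M"
    and lip: "\<And>x y. 0 \<le> x \<Longrightarrow> x \<le> y \<Longrightarrow> y \<le> T \<Longrightarrow> \<bar>u y - u x\<bar> \<le> k * (y - x)"
    and per: "u 0 = u T"
    and ab: "0 \<le> a" "a < b" "b \<le> T" "u a = M" "u b = - M"
  shows "a \<le> T/2" and "\<forall>x\<in>{0..T}. u x = k * peaked_triangle T a x"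
proof -
  have up: "u y - u x \<le> k * y - k * x" and down: "u x - u y \<le> k * y - k * x"
    if "0 \<le> x" "x \<le> y" "y \<le> T" for x y
    using lip[OF that] by (simp_all add: right_diff_distrib abs_le_iff)
  text \<open>The three arcs 0 \<rightarrow> a, a \<rightarrow> b, b \<rightarrow> T have total length T and together need
    a rise of at least 4M = kT, so each is traversed at full speed.\<close>
  have fall_ab: "u a - u b \<le> k * b - k * a" using down[of a b] ab by simp
  have rise_0a: "u a - u 0 \<le> k * a - k * 0" using up[of 0 a] ab by simp
  have rise_bT: "u T - u b \<le> k * T - k * b" using up[of b T] ab by simp
  have speed_ab: "k * b - k * a = 2 * M" and u0: "u 0 = M - k * a" and uT: "u T = k * T - k * b - M"
    using fall_ab rise_0a rise_bT k ab per by simp_all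
  then have "k * (b - a - T/2) = 0" using k by (simp add: algebra_simps)
  then have bT: "b = a + T/2" using k by simp
  then show "a \<le> T/2" using ab by simp
  show "\<forall>x\<in>{0..T}. u x = k * peaked_triangle T a x"
  proof
    fix x assume x: "x \<in> {0..T}"
    consider "x \<le> a" | "a < x" "x \<le> b" | "b < x" by linarith
    then show "u x = k * peaked_triangle T a x"
    proof cases
      case 1
      have "u x - u 0 \<le> k * x - k * 0" "u a - u x \<le> k * a - k * x"
        using up[of 0 x] up[of x a] x 1 ab by auto
      moreover have "k * peaked_triangle T a x = k * T / 4 - k * a + k * x"
        using 1 by (simp add: peaked_triangle_def algebra_simps)
      ultimately show ?thesis using u0 k ab by linarith
    next
      case 2
      have "u a - u x \<le> k * x - k * a" "u x - u b \<le> k * b - k * x"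
        using down[of a x] down[of x b] x 2 ab by auto
      moreover have "k * peaked_triangle T a x = k * T / 4 + k * a - k * x"
        using 2 bT by (simp add: peaked_triangle_def algebra_simps)
      ultimately show ?thesis using speed_ab k ab by linarith
    next
      case 3
      have "u x - u b \<le> k * x - k * b" "u T - u x \<le> k * T - k * x"
        using up[of b x] up[of x T] x 3 ab by auto
      moreover have "k * peaked_triangle T a x = k * x - k * a - 3 * (k * T) / 4"
        using 3 bT ab by (simp add: peaked_triangle_def algebra_simps)
      moreover have "k * b = k * a + k * T / 2"
        using bT by (simp add: algebra_simps)
      ultimately show ?thesis using uT k ab by linarith
    qed
  qed
qed

lemma lipschitz_extremal_wper:
  assumes T: "T > 0" and M: "M > 0"
    and lip: "\<And>x y. 0 \<le> x \<Longrightarrow> x \<le> y \<Longrightarrow> y \<le> T \<Longrightarrow> \<bar>u y - u x\<bar> \<le> 4 * M / T * (y - x)"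
    and per: "u 0 = u T"
    and ab: "a \<in> {0..T}" "b \<in> {0..T}" "u a = M" "u b = - M"
  shows "\<exists>c x0. c \<noteq> 0 \<and> x0 \<in> {0..T} \<and> (\<forall>x\<in>{0..T}. u x = c * wper T (x + x0))"
proof -
  define k where "k = 4 * M / T"
  have k: "k > 0" "k * T = 4 * M" using T M by (auto simp: k_def)
  have shape: "\<exists>x0\<in>{0..T}. \<forall>x\<in>{0..T}. v x = k * wper T (x + x0)"
    if lip_v: "\<And>x y. 0 \<le> x \<Longrightarrow> x \<le> y \<Longrightarrow> y \<le> T \<Longrightarrow> \<bar>v y - v x\<bar> \<le> k * (y - x)"
      and "v 0 = v T" "0 \<le> p" "p < q" "q \<le> T" "v p = M" "v q = - M" for v p q
  proof -
    note tri = lipschitz_extremal_triangle[OF T k lip_v that(2-)]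
    obtain x0 where "x0 \<in> {0..T}" "\<forall>x\<in>{0..T}. peaked_triangle T p x = wper T (x + x0)"
      using peaked_triangle_eq_wper[OF T \<open>0 \<le> p\<close> tri(1)] by blast
    then show ?thesis using tri(2) by auto
  qed
  have lip_u: "\<bar>u y - u x\<bar> \<le> k * (y - x)" if "0 \<le> x" "x \<le> y" "y \<le> T" for x y
    using lip[OF that] by (simp add: k_def)
  consider "a < b" | "b < a" | "a = b" by linarith
  then show ?thesis
  proof cases
    case 1
    then obtain x0 where "x0 \<in> {0..T}" "\<forall>x\<in>{0..T}. u x = k * wper T (x + x0)"
      using shape[of u a b, OF lip_u per] ab by auto
    then show ?thesis using k by (intro exI[of _ k] exI[of _ x0]) auto
  next
    case 2
    text \<open>Reverse the roles of maximum and minimum by passing to \<open>-u\<close>.\<close>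
    have lip_neg: "\<bar>- u y - - u x\<bar> \<le> k * (y - x)" if "0 \<le> x" "x \<le> y" "y \<le> T" for x y
      using lip_u[OF that] by (simp add: abs_minus_commute)
    obtain x0 where x0: "x0 \<in> {0..T}" "\<forall>x\<in>{0..T}. - u x = k * wper T (x + x0)"
      using shape[of "\<lambda>x. - u x" b a, OF lip_neg] per ab 2 by auto
    have "\<forall>x\<in>{0..T}. u x = (- k) * wper T (x + x0)"
      using x0(2) by (simp add: minus_equation_iff[of "u _"])
    then show ?thesis using k x0(1) by (intro exI[of _ "- k"] exI[of _ x0]) auto
  next
    case 3
    then show ?thesis using ab M by simp
  qed
qed

lemma X1per_periodic_primitive:
  assumes T: "T > 0" and u: "u \<in> X1per T"
  shows "periodic_primitive T u (wderiv T u)"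
    and "I1per T u = integral {0..T} (\<lambda>x. (wderiv T u x)\<^sup>2) / (supnorm T u)\<^sup>2"
proof -
  have H: "H1 T u" and per: "u 0 = u T" using u by (auto simp: X1per_def)
  then have "\<exists>g. is_weak_deriv T u g" by (simp add: H1_def)
  then have wd: "is_weak_deriv T u (wderiv T u)" unfolding wderiv_def by (rule someI_ex)
  then have g: "set_integrable lborel {0<..<T} (wderiv T u)"
    and g2: "set_integrable lborel {0<..<T} (\<lambda>x. (wderiv T u x)\<^sup>2)"
    by (auto simp: is_weak_deriv_def L2_def intro: L2_set_integrable)
  show "periodic_primitive T u (wderiv T u)"
  proof
    show "wderiv T u integrable_on {0..T}" by (rule set_integrable_imp_HK(1)[OF g])
    show "(\<lambda>x. \<bar>wderiv T u x\<bar>) integrable_on {0..T}"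
      using set_integrable_imp_HK(1)[OF set_integrable_abs[OF g]] by simp
    show "(\<lambda>x. (wderiv T u x)\<^sup>2) integrable_on {0..T}" by (rule set_integrable_imp_HK(1)[OF g2])
    show "u y - u x = integral {x..y} (wderiv T u)" if "0 \<le> x" "x \<le> y" "y \<le> T" for x y
      using H wd that by (intro weak_ftc[OF T]) (auto simp: H1_def)
  qed (use T per in auto)
  show "I1per T u = integral {0..T} (\<lambda>x. (wderiv T u x)\<^sup>2) / (supnorm T u)\<^sup>2"
    by (simp add: I1per_def set_integrable_imp_HK(2)[OF g2])
qed

text \<open>By continuity u attains its maximum and minimum; the normalisation
  \<open>max u + min u = 0\<close> makes them \<open>\<plusminus>\<close> the sup norm.\<close>
lemma X1per_extrema:
  assumes T: "T > 0" and u: "u \<in> X1per T" and nz: "\<exists>x\<in>{0..T}. u x \<noteq> 0"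
  obtains a b where "a \<in> {0..T}" "b \<in> {0..T}" "u a = supnorm T u" "u b = - supnorm T u"
    "supnorm T u > 0"
proof -
  have uc: "continuous_on {0..T} u" and sum0: "Sup (u ` {0..T}) + Inf (u ` {0..T}) = 0"
    using u by (auto simp: X1per_def H1_def)
  have cpt: "compact {0..T}" "{0..T} \<noteq> {}" using T by auto
  obtain a where a: "a \<in> {0..T}" "\<And>y. y \<in> {0..T} \<Longrightarrow> u y \<le> u a"
    using continuous_attains_sup[OF cpt uc] by blast
  obtain b where b: "b \<in> {0..T}" "\<And>y. y \<in> {0..T} \<Longrightarrow> u b \<le> u y"
    using continuous_attains_inf[OF cpt uc] by blast
  have "Sup (u ` {0..T}) = u a" using a by (intro cSup_eq_maximum) auto
  moreover have "Inf (u ` {0..T}) = u b" using b by (intro cInf_eq_minimum) auto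
  ultimately have ub: "u b = - u a" using sum0 by simp
  have bound: "\<bar>u y\<bar> \<le> u a" if "y \<in> {0..T}" for y
    using a(2)[OF that] b(2)[OF that] ub by linarith
  have "u a \<in> (\<lambda>x. \<bar>u x\<bar>) ` {0..T}"
    using bound[OF a(1)] a(1) by (intro image_eqI[of _ _ a]) auto
  then have "supnorm T u = u a"
    unfolding supnorm_def using bound by (intro cSup_eq_maximum) auto
  moreover have "u a > 0"
    using nz bound by force
  ultimately show ?thesis using that a(1) b(1) ub by simp
qed

lemma X1per_rayleigh_quotient:
  assumes T: "T > 0" and u: "u \<in> X1per T" and nz: "\<exists>x\<in>{0..T}. u x \<noteq> 0"
  shows "16 / T \<le> I1per T u"
    and "I1per T u = 16 / T \<Longrightarrow>
      \<exists>c x0. c \<noteq> 0 \<and> x0 \<in> {0..T} \<and> (\<forall>x\<in>{0..T}. u x = c * wper T (x + x0))"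
proof -
  interpret periodic_primitive T u "wderiv T u"
    by (rule X1per_periodic_primitive(1)[OF T u])
  obtain a b where ab: "a \<in> {0..T}" "b \<in> {0..T}" "u a = supnorm T u" "u b = - supnorm T u"
    and M: "supnorm T u > 0"
    using X1per_extrema[OF T u nz] by blast
  define M E where "M = supnorm T u" and "E = integral {0..T} (\<lambda>x. (wderiv T u x)\<^sup>2)"
  have I: "I1per T u = E / M\<^sup>2"
    using X1per_periodic_primitive(2)[OF T u] by (simp add: M_def E_def)
  have "16 * M\<^sup>2 / T \<le> E"
    using energy_lower_bound[OF ab] M by (simp add: M_def E_def)
  then show "16 / T \<le> I1per T u"
    using M T by (simp add: I M_def field_simps)
  assume "I1per T u = 16 / T"
  then have "E = 16 * M\<^sup>2 / T" using M by (simp add: I M_def field_simps)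
  then show "\<exists>c x0. c \<noteq> 0 \<and> x0 \<in> {0..T} \<and> (\<forall>x\<in>{0..T}. u x = c * wper T (x + x0))"
    using lipschitz_extremal_wper[OF T M energy_equality_lipschitz[OF ab] periodic ab] M
    by (simp add: M_def E_def)
qed

theorem mainTheorem3:
  fixes T :: real
  assumes "T > 0"
  shows "(\<forall>u \<in> X1per T. (\<exists>x\<in>{0..T}. u x \<noteq> 0) \<longrightarrow> I1per T u \<ge> 16 / T)
    \<and> (\<forall>u \<in> X1per T. (\<exists>x\<in>{0..T}. u x \<noteq> 0) \<and> I1per T u = 16 / T \<longrightarrow>
         (\<exists>c x0. c \<noteq> 0 \<and> x0 \<in> {0..T} \<and> (\<forall>x\<in>{0..T}. u x = c * wper T (x + x0))))"
  using X1per_rayleigh_quotient[OF assms] by blast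

end
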